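(* Let $P_1,\ldots,P_d$ be real-valued random variables (test statistics, not necessarily $p$-values) associated with null hypotheses $H_1,\ldots,H_d$, and let $I_0\subseteq\{1,\ldots,d\}$ be the index set of true null hypotheses. Fix $\tilde\alpha\in(0,1)$ and consider the step-up procedure based on $P_1,\ldots,P_d$ with critical constants $\alpha_i=i\tilde\alpha/d$, $i=1,\ldots,d$. Fix $c\in(\tilde\alpha,1]$ and a subset $\mathcal S\subseteq I_0$, and assume: (1) for each $i\in I_0\setminus\mathcal S$, $P_i$ is PLTDN on $\boldsymbol P_{-i}$ over $(0,c)$; (2) for each $i\in\mathcal S$ there is a random variable $\hat P_i$ such that, conditionally on $\boldsymbol P_{-i}$, $\hat P_i$ is a nondecreasing function of $P_i$ and is stochastically smaller than $P_i$, i.e. almost surely $\Pr(P_i\le u\mid \boldsymbol P_{-i})\le \Pr(\hat P_i\le u\mid \boldsymbol P_{-i})$ for all $u\in(0,c)$; and $\hat P_i$ is PLTDN on $\boldsymbol P_{-i}$ over $(0,c)$. Then the false discovery rate of this step-up procedure satisfies $$\mathrm{FDR}\le \sum_{i\in I_0\setminus\mathcal S}\Pr\big(P_i\le \tilde\alpha/d\big)+\sum_{i\in \mathcal S}\Pr\big(\hat P_i\le \tilde\alpha/d\big).$$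
   Context: Step-up procedure with critical constants $\alpha_1\le\cdots\le\alpha_d$: order the statistics as $P_{(1)}\le\cdots\le P_{(d)}$, let $R=\max\{i: P_{(i)}\le\alpha_i\}$, and reject $H_i$ for all $i$ with $P_i\le P_{(R)}$ if $R$ exists; otherwise reject nothing. The false discovery rate is $\mathrm{FDR}=E[V/\max(R,1)]$, where $V$ is the number of rejected true nulls and $R$ the number of rejections. $\boldsymbol P_{-i}$ denotes the vector $(P_1,\ldots,P_d)$ with the $i$-th coordinate removed. PLTDN (positive left-tail dependence under the null): for $i\in I_0$ and $c\in(0,1]$, a random variable $Q$ is said to be PLTDN on $\boldsymbol P_{-i}$ over $(0,c)$ if either (a) $u\mapsto \Pr(Q\le u\mid\boldsymbol P_{-i})/u$ is (almost surely) nonincreasing on $(0,c)$; or (b) for every coordinatewise nondecreasing function $g$ of $\boldsymbol P_{-i}$ and every fixed constant $t$ (with $\Pr(g(\boldsymbol P_{-i})\le t)>0$), $u\mapsto\Pr(Q\le u\mid g(\boldsymbol P_{-i})\le t)/u$ is nonincreasing on $(0,c)$. *)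

theory Defs
  imports "HOL-Probability.Probability"
begin

text \<open>Index set of hypotheses is {1..d}.  The vector P_{-i}, represented as a function
  on nat which is 0 outside {1..d}-{i}.\<close>
definition Pminus :: "nat \<Rightarrow> (nat \<Rightarrow> 'a \<Rightarrow> real) \<Rightarrow> nat \<Rightarrow> 'a \<Rightarrow> (nat \<Rightarrow> real)" where
  "Pminus d P i \<omega> = (\<lambda>j. if j \<in> {1..d} - {i} then P j \<omega> else 0)"

definition sigma_Pminus :: "'a measure \<Rightarrow> nat \<Rightarrow> (nat \<Rightarrow> 'a \<Rightarrow> real) \<Rightarrow> nat \<Rightarrow> 'a measure" where
  "sigma_Pminus M d P i = sigma (space M)
     (\<Union>j\<in>{1..d} - {i}. {P j -` B \<inter> space M | B. B \<in> sets borel})"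

definition cond_prob_le :: "'a measure \<Rightarrow> nat \<Rightarrow> (nat \<Rightarrow> 'a \<Rightarrow> real) \<Rightarrow> nat \<Rightarrow> ('a \<Rightarrow> real) \<Rightarrow> real \<Rightarrow> 'a \<Rightarrow> real" where
  "cond_prob_le M d P i Q u = real_cond_exp M (sigma_Pminus M d P i)
     (\<lambda>\<omega>. indicator {\<omega> \<in> space M. Q \<omega> \<le> u} \<omega>)"

definition PLTDN_a :: "'a measure \<Rightarrow> nat \<Rightarrow> (nat \<Rightarrow> 'a \<Rightarrow> real) \<Rightarrow> nat \<Rightarrow> ('a \<Rightarrow> real) \<Rightarrow> real \<Rightarrow> bool" where
  "PLTDN_a M d P i Q c \<longleftrightarrow>
     (\<forall>u v. 0 < u \<and> u \<le> v \<and> v < c \<longrightarrow>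
        (AE \<omega> in M. cond_prob_le M d P i Q v \<omega> / v \<le> cond_prob_le M d P i Q u \<omega> / u))"

definition coord_mono :: "nat \<Rightarrow> nat \<Rightarrow> ((nat \<Rightarrow> real) \<Rightarrow> real) \<Rightarrow> bool" where
  "coord_mono d i g \<longleftrightarrow> (\<forall>x y. (\<forall>j\<in>{1..d} - {i}. x j \<le> y j) \<longrightarrow> g x \<le> g y)"

definition PLTDN_b :: "'a measure \<Rightarrow> nat \<Rightarrow> (nat \<Rightarrow> 'a \<Rightarrow> real) \<Rightarrow> nat \<Rightarrow> ('a \<Rightarrow> real) \<Rightarrow> real \<Rightarrow> bool" where
  "PLTDN_b M d P i Q c \<longleftrightarrow>
     (\<forall>g t. coord_mono d i g
        \<and> {\<omega> \<in> space M. g (Pminus d P i \<omega>) \<le> t} \<in> sets M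
        \<and> measure M {\<omega> \<in> space M. g (Pminus d P i \<omega>) \<le> t} > 0 \<longrightarrow>
        (\<forall>u v. 0 < u \<and> u \<le> v \<and> v < c \<longrightarrow>
          measure M {\<omega> \<in> space M. Q \<omega> \<le> v \<and> g (Pminus d P i \<omega>) \<le> t}
            / measure M {\<omega> \<in> space M. g (Pminus d P i \<omega>) \<le> t} / v
          \<le> measure M {\<omega> \<in> space M. Q \<omega> \<le> u \<and> g (Pminus d P i \<omega>) \<le> t}
            / measure M {\<omega> \<in> space M. g (Pminus d P i \<omega>) \<le> t} / u))"

definition PLTDN :: "'a measure \<Rightarrow> nat \<Rightarrow> (nat \<Rightarrow> 'a \<Rightarrow> real) \<Rightarrow> nat \<Rightarrow> ('a \<Rightarrow> real) \<Rightarrow> real \<Rightarrow> bool" where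
  "PLTDN M d P i Q c \<longleftrightarrow> PLTDN_a M d P i Q c \<or> PLTDN_b M d P i Q c"

definition order_stat :: "nat \<Rightarrow> (nat \<Rightarrow> 'a \<Rightarrow> real) \<Rightarrow> 'a \<Rightarrow> nat \<Rightarrow> real" where
  "order_stat d P \<omega> k = sort (map (\<lambda>j. P j \<omega>) [1..<d+1]) ! (k - 1)"

definition stepup_R :: "nat \<Rightarrow> (nat \<Rightarrow> real) \<Rightarrow> (nat \<Rightarrow> 'a \<Rightarrow> real) \<Rightarrow> 'a \<Rightarrow> nat" where
  "stepup_R d alpha P \<omega> = Max ({0} \<union> {k \<in> {1..d}. order_stat d P \<omega> k \<le> alpha k})"

definition stepup_rejected :: "nat \<Rightarrow> (nat \<Rightarrow> real) \<Rightarrow> (nat \<Rightarrow> 'a \<Rightarrow> real) \<Rightarrow> 'a \<Rightarrow> nat set" where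
  "stepup_rejected d alpha P \<omega> =
     (if stepup_R d alpha P \<omega> = 0 then {}
      else {j \<in> {1..d}. P j \<omega> \<le> order_stat d P \<omega> (stepup_R d alpha P \<omega>)})"

definition FDR :: "'a measure \<Rightarrow> nat \<Rightarrow> (nat \<Rightarrow> real) \<Rightarrow> (nat \<Rightarrow> 'a \<Rightarrow> real) \<Rightarrow> nat set \<Rightarrow> real" where
  "FDR M d alpha P I0 = (\<integral>\<omega>. real (card (stepup_rejected d alpha P \<omega> \<inter> I0))
        / real (max (card (stepup_rejected d alpha P \<omega>)) 1) \<partial>M)"

end

theory Submission
  imports Defs
begin

text \<open>Let \<open>R\<^sub>-\<^sub>i\<close> be the number of rejections once \<open>P\<^sub>i\<close> is moved below \<open>\<alpha>\<^sub>1\<close>; it is a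
  function of \<open>P\<^sub>-\<^sub>i\<close> alone, and on \<open>{P\<^sub>i \<le> \<alpha>\<^sub>k}\<close> the procedure makes \<open>k\<close> rejections
  iff \<open>R\<^sub>-\<^sub>i = k\<close>. Hence \<open>FDR = \<Sum>\<^sub>i\<^sub>\<in>\<^sub>I\<^sub>0 \<Sum>\<^sub>k Pr(P\<^sub>i \<le> \<alpha>\<^sub>k, R\<^sub>-\<^sub>i = k) / k\<close>.
  For \<open>\<alpha>\<^sub>k = k \<alpha>\<^sub>1\<close>, PLTDN (a) bounds \<open>Pr(Q \<le> \<alpha>\<^sub>k | P\<^sub>-\<^sub>i)\<close> by \<open>k Pr(Q \<le> \<alpha>\<^sub>1 | P\<^sub>-\<^sub>i)\<close>,
  so the inner sum is at most \<open>\<Sum>\<^sub>k Pr(Q \<le> \<alpha>\<^sub>1, R\<^sub>-\<^sub>i = k) \<le> Pr(Q \<le> \<alpha>\<^sub>1)\<close>; PLTDN (b),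
  applied to the nondecreasing function \<open>-R\<^sub>-\<^sub>i\<close> and the events \<open>{R\<^sub>-\<^sub>i \<ge> k}\<close>, makes the
  inner sum telescope to the same bound. For \<open>i \<in> S\<close> the events \<open>{R\<^sub>-\<^sub>i = k}\<close> lie in
  \<open>\<sigma>(P\<^sub>-\<^sub>i)\<close>, so the conditional stochastic ordering first lets \<open>P\<^sub>i\<close> be replaced by
  \<open>Phat i\<close>.\<close>

section \<open>The step-up procedure\<close>

lemma sorted_nth_le_iff_le_length_filter:
  fixes xs :: "'b::linorder list"
  assumes "sorted xs" "1 \<le> k" "k \<le> length xs"
  shows "xs ! (k - 1) \<le> a \<longleftrightarrow> k \<le> length (filter (\<lambda>x. x \<le> a) xs)"
proof -
  define I where "I = {j. j < length xs \<and> xs ! j \<le> a}"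
  have length_filter: "length (filter (\<lambda>x. x \<le> a) xs) = card I"
    unfolding I_def by (rule length_filter_conv_card)
  show ?thesis
  proof
    assume "xs ! (k - 1) \<le> a"
    have "{0..<k} \<subseteq> I"
    proof
      fix j assume "j \<in> {0..<k}"
      then have "xs ! j \<le> xs ! (k - 1)" "j < length xs"
        using assms sorted_nth_mono[OF assms(1), of j "k - 1"] by auto
      then show "j \<in> I" using \<open>xs ! (k - 1) \<le> a\<close> by (simp add: I_def)
    qed
    then show "k \<le> length (filter (\<lambda>x. x \<le> a) xs)"
      unfolding length_filter using card_mono[of I "{0..<k}"] by (simp add: I_def)
  next
    assume k_le: "k \<le> length (filter (\<lambda>x. x \<le> a) xs)"
    show "xs ! (k - 1) \<le> a"
    proof (rule ccontr)
      assume "\<not> xs ! (k - 1) \<le> a"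
      then have "I \<subseteq> {0..<k - 1}"
        using sorted_nth_mono[OF assms(1), of "k - 1"] by (force simp: I_def not_less[symmetric])
      then have "card I \<le> k - 1"
        using card_mono[of "{0..<k - 1}" I] by simp
      then show False using k_le assms(2) unfolding length_filter by linarith
    qed
  qed
qed

lemma order_stat_le_iff:
  assumes "1 \<le> k" "k \<le> d"
  shows "order_stat d P \<omega> k \<le> a \<longleftrightarrow> k \<le> card {j\<in>{1..d}. P j \<omega> \<le> a}"
proof -
  let ?xs = "map (\<lambda>j. P j \<omega>) [1..<d+1]"
  have "length (filter (\<lambda>x. x \<le> a) (sort ?xs)) = length (filter (\<lambda>j. P j \<omega> \<le> a) [1..<d+1])"
    by (simp add: filter_sort filter_map comp_def)
  also have "\<dots> = card {j\<in>{1..d}. P j \<omega> \<le> a}"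
    by (subst distinct_length_filter) (auto intro!: arg_cong[where f=card])
  finally show ?thesis
    unfolding order_stat_def using sorted_nth_le_iff_le_length_filter[of "sort ?xs" k a] assms
    by simp
qed

definition max_index :: "nat \<Rightarrow> (nat \<Rightarrow> bool) \<Rightarrow> nat" where
  "max_index d q = Max ({0} \<union> {k\<in>{1..d}. q k})"

lemma max_index_eq_Max_Collect: "max_index d q = Max {k. k = 0 \<or> k \<in> {1..d} \<and> q k}"
  unfolding max_index_def by (rule arg_cong[where f=Max]) auto

lemma le_max_index_iff: "k \<le> max_index d q \<longleftrightarrow> k = 0 \<or> (\<exists>m\<in>{k..d}. q m)"
  unfolding max_index_def by (subst Max_ge_iff) (auto, metis Suc_leI gr0I le_zero_eq)

lemma max_index_eq_iff:
  assumes "k \<in> {1..d}"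
  shows "max_index d q = k \<longleftrightarrow> q k \<and> (\<forall>m\<in>{k<..d}. \<not> q m)"
proof -
  have "max_index d q = k \<longleftrightarrow> k \<le> max_index d q \<and> \<not> Suc k \<le> max_index d q" by auto
  also have "\<dots> \<longleftrightarrow> q k \<and> (\<forall>m\<in>{k<..d}. \<not> q m)"
    unfolding le_max_index_iff using assms by (auto simp: Suc_le_eq)
  finally show ?thesis .
qed

lemma max_index_nonzero:
  assumes "max_index d q \<noteq> 0"
  shows "q (max_index d q)" "max_index d q \<in> {1..d}"
proof -
  have "max_index d q \<in> {0} \<union> {k\<in>{1..d}. q k}"
    unfolding max_index_def by (rule Max_in) auto
  then show "q (max_index d q)" "max_index d q \<in> {1..d}" using assms by auto
qed

lemma max_index_greatest: "k \<in> {1..d} \<Longrightarrow> q k \<Longrightarrow> k \<le> max_index d q"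
  unfolding le_max_index_iff by auto

lemma max_index_mono: "(\<And>k. q k \<Longrightarrow> q' k) \<Longrightarrow> max_index d q \<le> max_index d q'"
  using le_max_index_iff[of "max_index d q" d] le_max_index_iff[of "max_index d q" d q'] by auto

lemma stepup_R_eq_max_index:
  "stepup_R d alpha P \<omega> = max_index d (\<lambda>k. k \<le> card {j\<in>{1..d}. P j \<omega> \<le> alpha k})"
proof -
  have "{k\<in>{1..d}. order_stat d P \<omega> k \<le> alpha k}
      = {k\<in>{1..d}. k \<le> card {j\<in>{1..d}. P j \<omega> \<le> alpha k}}"
    by (intro Collect_cong conj_cong refl) (simp add: order_stat_le_iff)
  then show ?thesis unfolding stepup_R_def max_index_def by simp
qed

text \<open>The number of rejections once \<open>P\<^sub>i\<close> is moved below \<open>\<alpha>\<^sub>1\<close>, as a function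
  of \<open>x = P\<^sub>-\<^sub>i\<close>; coordinate \<open>i\<close> of \<open>x\<close> is ignored.\<close>
definition stepup_R_minus :: "nat \<Rightarrow> (nat \<Rightarrow> real) \<Rightarrow> nat \<Rightarrow> (nat \<Rightarrow> real) \<Rightarrow> nat" where
  "stepup_R_minus d alpha i x = max_index d (\<lambda>k. k \<le> card {j\<in>{1..d} - {i}. x j \<le> alpha k} + 1)"

lemma stepup_R_minus_Pminus:
  "stepup_R_minus d alpha i (Pminus d P i \<omega>)
     = max_index d (\<lambda>k. k \<le> card {j\<in>{1..d} - {i}. P j \<omega> \<le> alpha k} + 1)"
proof -
  have "{j\<in>{1..d} - {i}. Pminus d P i \<omega> j \<le> b} = {j\<in>{1..d} - {i}. P j \<omega> \<le> b}" for b
    unfolding Pminus_def by auto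
  then show ?thesis unfolding stepup_R_minus_def by simp
qed

lemma stepup_R_minus_antimono:
  assumes "\<forall>j\<in>{1..d} - {i}. x j \<le> y j"
  shows "stepup_R_minus d alpha i y \<le> stepup_R_minus d alpha i x"
  unfolding stepup_R_minus_def
proof (rule max_index_mono)
  fix k
  have "card {j\<in>{1..d} - {i}. y j \<le> alpha k} \<le> card {j\<in>{1..d} - {i}. x j \<le> alpha k}"
    using assms by (intro card_mono) force+
  then show "k \<le> card {j\<in>{1..d} - {i}. y j \<le> alpha k} + 1
      \<Longrightarrow> k \<le> card {j\<in>{1..d} - {i}. x j \<le> alpha k} + 1" by linarith
qed

lemma card_le_insert_index:
  fixes P :: "nat \<Rightarrow> 'a \<Rightarrow> real"
  assumes "i \<in> {1..d}" "P i \<omega> \<le> b"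
  shows "card {j\<in>{1..d}. P j \<omega> \<le> b} = card {j\<in>{1..d} - {i}. P j \<omega> \<le> b} + 1"
proof -
  have "{j\<in>{1..d}. P j \<omega> \<le> b} = insert i {j\<in>{1..d} - {i}. P j \<omega> \<le> b}" using assms by auto
  moreover have "finite {j\<in>{1..d} - {i}. P j \<omega> \<le> b}" by (rule finite_subset[of _ "{1..d}"]) auto
  ultimately show ?thesis by simp
qed

lemma stepup_R_eq_iff_stepup_R_minus_eq:
  assumes "mono alpha" "i \<in> {1..d}" "k \<in> {1..d}" "P i \<omega> \<le> alpha k"
  shows "stepup_R d alpha P \<omega> = k \<longleftrightarrow> stepup_R_minus d alpha i (Pminus d P i \<omega>) = k"
proof -
  have same_test: "m \<le> card {j\<in>{1..d}. P j \<omega> \<le> alpha m} \<longleftrightarrow>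
        m \<le> card {j\<in>{1..d} - {i}. P j \<omega> \<le> alpha m} + 1" if "k \<le> m" for m
  proof -
    have "P i \<omega> \<le> alpha m" using assms(4) monoD[OF assms(1) that] by linarith
    then show ?thesis using card_le_insert_index[OF assms(2), of P \<omega> "alpha m"] by simp
  qed
  have "\<forall>m\<in>{k<..d}. m \<le> card {j\<in>{1..d}. P j \<omega> \<le> alpha m} \<longleftrightarrow>
        m \<le> card {j\<in>{1..d} - {i}. P j \<omega> \<le> alpha m} + 1"
    using same_test by simp
  then show ?thesis
    unfolding stepup_R_eq_max_index stepup_R_minus_Pminus max_index_eq_iff[OF assms(3)]
    using same_test[OF order_refl] by blast
qed

lemma
  assumes "mono alpha" "stepup_R d alpha P \<omega> \<noteq> 0"
  shows stepup_rejected_eq: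
      "stepup_rejected d alpha P \<omega> = {j\<in>{1..d}. P j \<omega> \<le> alpha (stepup_R d alpha P \<omega>)}"
    and card_stepup_rejected: "card (stepup_rejected d alpha P \<omega>) = stepup_R d alpha P \<omega>"
proof -
  define R where "R = stepup_R d alpha P \<omega>"
  have R: "R \<le> card {j\<in>{1..d}. P j \<omega> \<le> alpha R}" "R \<in> {1..d}"
    using max_index_nonzero[of d] assms(2) unfolding R_def stepup_R_eq_max_index by auto
  have card_R: "card {j\<in>{1..d}. P j \<omega> \<le> alpha R} = R"
  proof (rule ccontr)
    define m where "m = card {j\<in>{1..d}. P j \<omega> \<le> alpha R}"
    assume "m \<noteq> R"
    then have R_less: "R < m" using R m_def by auto
    have "m \<le> d" unfolding m_def by (rule order.trans[OF card_mono[of "{1..d}"]]) auto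
    have "alpha R \<le> alpha m" using R_less assms(1) by (meson monoD less_imp_le)
    then have "{j\<in>{1..d}. P j \<omega> \<le> alpha R} \<subseteq> {j\<in>{1..d}. P j \<omega> \<le> alpha m}" by auto
    then have "m \<le> card {j\<in>{1..d}. P j \<omega> \<le> alpha m}" unfolding m_def
      by (rule card_mono[rotated]) auto
    then have "m \<le> R" unfolding R_def stepup_R_eq_max_index
      using \<open>m \<le> d\<close> R_less R(2) by (intro max_index_greatest) auto
    then show False using R_less by simp
  qed
  have os_le: "order_stat d P \<omega> R \<le> alpha R" using order_stat_le_iff[of R d P \<omega>] R by auto
  have sub: "{j\<in>{1..d}. P j \<omega> \<le> order_stat d P \<omega> R} \<subseteq> {j\<in>{1..d}. P j \<omega> \<le> alpha R}"
    using os_le by auto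
  have R_le: "R \<le> card {j\<in>{1..d}. P j \<omega> \<le> order_stat d P \<omega> R}"
    using order_stat_le_iff[of R d P \<omega> "order_stat d P \<omega> R"] R by auto
  have "{j\<in>{1..d}. P j \<omega> \<le> order_stat d P \<omega> R} = {j\<in>{1..d}. P j \<omega> \<le> alpha R}"
  proof (rule card_subset_eq[OF _ sub])
    have "card {j\<in>{1..d}. P j \<omega> \<le> order_stat d P \<omega> R} \<le> card {j\<in>{1..d}. P j \<omega> \<le> alpha R}"
      using sub by (rule card_mono[rotated]) simp
    then show "card {j\<in>{1..d}. P j \<omega> \<le> order_stat d P \<omega> R} = card {j\<in>{1..d}. P j \<omega> \<le> alpha R}"
      using card_R R_le by linarith
  qed simp
  then show "stepup_rejected d alpha P \<omega> = {j\<in>{1..d}. P j \<omega> \<le> alpha (stepup_R d alpha P \<omega>)}"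
    unfolding stepup_rejected_def using assms(2) R_def by simp
  then show "card (stepup_rejected d alpha P \<omega>) = stepup_R d alpha P \<omega>" using card_R R_def by simp
qed

lemma false_discovery_proportion_eq:
  assumes "mono alpha" "I0 \<subseteq> {1..d}"
  shows "real (card (stepup_rejected d alpha P \<omega> \<inter> I0))
           / real (max (card (stepup_rejected d alpha P \<omega>)) 1)
       = (\<Sum>i\<in>I0. \<Sum>k\<in>{1..d}.
            of_bool (P i \<omega> \<le> alpha k \<and> stepup_R_minus d alpha i (Pminus d P i \<omega>) = k) / real k)"
proof -
  define R where "R = stepup_R d alpha P \<omega>"
  have R_cases: "R = 0 \<or> R \<in> {1..d}"
    using max_index_nonzero(2) unfolding R_def stepup_R_eq_max_index by blast
  have "(\<Sum>k\<in>{1..d}.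
            of_bool (P i \<omega> \<le> alpha k \<and> stepup_R_minus d alpha i (Pminus d P i \<omega>) = k) / real k)
      = of_bool (R \<noteq> 0 \<and> P i \<omega> \<le> alpha R) / real R" if "i \<in> I0" for i
  proof -
    have "(\<Sum>k\<in>{1..d}.
            of_bool (P i \<omega> \<le> alpha k \<and> stepup_R_minus d alpha i (Pminus d P i \<omega>) = k) / real k)
        = (\<Sum>k\<in>{1..d}. if k = R then of_bool (P i \<omega> \<le> alpha R) / real R else 0)"
    proof (rule sum.cong[OF refl])
      fix k assume "k \<in> {1..d}"
      then have "P i \<omega> \<le> alpha k \<and> stepup_R_minus d alpha i (Pminus d P i \<omega>) = k
          \<longleftrightarrow> P i \<omega> \<le> alpha k \<and> R = k"
        using stepup_R_eq_iff_stepup_R_minus_eq[OF assms(1), of i d k P \<omega>] that assms(2)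
        unfolding R_def by blast
      then show "of_bool (P i \<omega> \<le> alpha k \<and> stepup_R_minus d alpha i (Pminus d P i \<omega>) = k)
          / real k = (if k = R then of_bool (P i \<omega> \<le> alpha R) / real R else 0)" by auto
    qed
    also have "\<dots> = of_bool (R \<noteq> 0 \<and> P i \<omega> \<le> alpha R) / real R"
      using R_cases by auto
    finally show ?thesis .
  qed
  moreover have "real (card (stepup_rejected d alpha P \<omega> \<inter> I0))
      / real (max (card (stepup_rejected d alpha P \<omega>)) 1)
      = (\<Sum>i\<in>I0. of_bool (R \<noteq> 0 \<and> P i \<omega> \<le> alpha R) / real R)"
  proof (cases "R = 0")
    case True
    then show ?thesis unfolding stepup_rejected_def R_def by simp
  next
    case False
    have "finite I0" using assms(2) finite_subset by blast
    have "stepup_rejected d alpha P \<omega> \<inter> I0 = I0 \<inter> {i. P i \<omega> \<le> alpha R}"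
      using stepup_rejected_eq[OF assms(1) False[unfolded R_def]] assms(2) by (auto simp: R_def)
    moreover have "card (stepup_rejected d alpha P \<omega>) = R"
      using card_stepup_rejected[OF assms(1) False[unfolded R_def]] by (simp add: R_def)
    ultimately show ?thesis
      using False \<open>finite I0\<close> by (simp add: sum_divide_distrib[symmetric])
  qed
  ultimately show ?thesis by simp
qed

section \<open>Conditioning on \<open>P\<^sub>-\<^sub>i\<close>\<close>

lemma measurable_max_index:
  assumes [measurable]: "\<And>k. Measurable.pred N (q k)"
  shows "(\<lambda>\<omega>. max_index d (\<lambda>k. q k \<omega>)) \<in> measurable N (count_space UNIV)"
  unfolding max_index_eq_Max_Collect by measurable

lemma measurable_stepup_R_minus:
  fixes P :: "nat \<Rightarrow> 'a \<Rightarrow> real"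
  assumes "\<And>j. j \<in> {1..d} - {i} \<Longrightarrow> P j \<in> borel_measurable N"
  shows "(\<lambda>\<omega>. stepup_R_minus d alpha i (Pminus d P i \<omega>)) \<in> measurable N (count_space UNIV)"
proof -
  have "{\<omega>\<in>space N. j \<in> {j\<in>{1..d} - {i}. P j \<omega> \<le> b}} \<in> sets N" for j b
  proof (cases "j \<in> {1..d} - {i}")
    case True
    have "{\<omega>\<in>space N. j \<in> {j\<in>{1..d} - {i}. P j \<omega> \<le> b}} = {\<omega>\<in>space N. P j \<omega> \<le> b}"
      using True by auto
    also have "\<dots> \<in> sets N" using assms[OF True] by measurable
    finally show ?thesis .
  next
    case False
    then have "{\<omega>\<in>space N. j \<in> {j\<in>{1..d} - {i}. P j \<omega> \<le> b}} = {}" by blast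
    then show ?thesis by (simp only: sets.empty_sets)
  qed
  then have [measurable]: "(\<lambda>\<omega>. card {j\<in>{1..d} - {i}. P j \<omega> \<le> b}) \<in> measurable N (count_space UNIV)"
    for b by (rule measurable_card)
  have "Measurable.pred N (\<lambda>\<omega>. k \<le> card {j\<in>{1..d} - {i}. P j \<omega> \<le> alpha k} + 1)" for k
    by measurable
  then show ?thesis unfolding stepup_R_minus_Pminus by (rule measurable_max_index)
qed

lemma sigma_Pminus_generator_subset:
  "(\<Union>j\<in>{1..d} - {i}. {P j -` B \<inter> space M | B. B \<in> sets borel}) \<subseteq> Pow (space M)"
  by auto

lemma space_sigma_Pminus: "space (sigma_Pminus M d P i) = space M"
  unfolding sigma_Pminus_def by (rule space_measure_of[OF sigma_Pminus_generator_subset])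

lemma sets_sigma_Pminus:
  "sets (sigma_Pminus M d P i)
     = sigma_sets (space M) (\<Union>j\<in>{1..d} - {i}. {P j -` B \<inter> space M | B. B \<in> sets borel})"
  unfolding sigma_Pminus_def by (rule sets_measure_of[OF sigma_Pminus_generator_subset])

lemma measurable_sigma_Pminus:
  assumes "j \<in> {1..d} - {i}"
  shows "P j \<in> borel_measurable (sigma_Pminus M d P i)"
proof (rule measurableI)
  fix B :: "real set" assume "B \<in> sets borel"
  then show "P j -` B \<inter> space (sigma_Pminus M d P i) \<in> sets (sigma_Pminus M d P i)"
    unfolding space_sigma_Pminus sets_sigma_Pminus using assms by (intro sigma_sets.Basic) blast
qed auto

lemma subalgebra_sigma_Pminus:
  assumes "\<And>j. j \<in> {1..d} \<Longrightarrow> P j \<in> borel_measurable M"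
  shows "subalgebra M (sigma_Pminus M d P i)"
  unfolding subalgebra_def
proof
  have "(\<Union>j\<in>{1..d} - {i}. {P j -` B \<inter> space M | B. B \<in> sets borel}) \<subseteq> sets M"
    using assms by (auto intro: measurable_sets)
  then show "sets (sigma_Pminus M d P i) \<subseteq> sets M"
    unfolding sets_sigma_Pminus by (rule sets.sigma_sets_subset)
qed (rule space_sigma_Pminus)

lemma stepup_R_minus_eq_in_sigma_Pminus:
  "{\<omega>\<in>space M. stepup_R_minus d alpha i (Pminus d P i \<omega>) = k} \<in> sets (sigma_Pminus M d P i)"
proof -
  have [measurable]: "(\<lambda>\<omega>. stepup_R_minus d alpha i (Pminus d P i \<omega>))
      \<in> measurable (sigma_Pminus M d P i) (count_space UNIV)"
    by (intro measurable_stepup_R_minus measurable_sigma_Pminus)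
  have "{\<omega>\<in>space (sigma_Pminus M d P i). stepup_R_minus d alpha i (Pminus d P i \<omega>) = k}
      \<in> sets (sigma_Pminus M d P i)" by measurable
  then show ?thesis unfolding space_sigma_Pminus .
qed

context prob_space
begin

lemma sigma_finite_subalgebra_sigma_Pminus:
  assumes "\<And>j. j \<in> {1..d} \<Longrightarrow> P j \<in> borel_measurable M"
  shows "sigma_finite_subalgebra M (sigma_Pminus M d P i)"
proof -
  have "finite_measure_subalgebra M (sigma_Pminus M d P i)"
    unfolding finite_measure_subalgebra_def finite_measure_subalgebra_axioms_def
    using finite_measure_axioms subalgebra_sigma_Pminus[where d=d and P=P and i=i, OF assms] by blast
  then show ?thesis by (rule finite_measure_subalgebra_is_sigma_finite)
qed

lemma
  assumes "\<And>j. j \<in> {1..d} \<Longrightarrow> P j \<in> borel_measurable M" and [measurable]: "Q \<in> borel_measurable M"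
  shows integrable_cond_prob_le: "integrable M (cond_prob_le M d P i Q u)"
    and set_integral_cond_prob_le: "C \<in> sets (sigma_Pminus M d P i) \<Longrightarrow>
      (\<integral>\<omega>\<in>C. cond_prob_le M d P i Q u \<omega> \<partial>M) = measure M ({\<omega>\<in>space M. Q \<omega> \<le> u} \<inter> C)"
proof -
  interpret sigma_finite_subalgebra M "sigma_Pminus M d P i"
    by (rule sigma_finite_subalgebra_sigma_Pminus[where d=d and P=P and i=i, OF assms(1)])
  define A where "A = {\<omega>\<in>space M. Q \<omega> \<le> u}"
  have A: "A \<in> sets M" unfolding A_def by measurable
  then have int: "integrable M (indicator A :: 'a \<Rightarrow> real)" by (simp add: emeasure_eq_measure)
  then show "integrable M (cond_prob_le M d P i Q u)"
    unfolding cond_prob_le_def A_def by (rule real_cond_exp_int(1))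
  assume C: "C \<in> sets (sigma_Pminus M d P i)"
  then have "C \<in> sets M" using subalg by (auto simp: subalgebra_def)
  have "(\<integral>\<omega>\<in>C. cond_prob_le M d P i Q u \<omega> \<partial>M) = (\<integral>\<omega>\<in>C. indicator A \<omega> \<partial>M)"
    unfolding cond_prob_le_def A_def by (rule real_cond_exp_intA[OF int C, symmetric, unfolded A_def])
  also have "\<dots> = (\<integral>\<omega>. indicator (A \<inter> C) \<omega> \<partial>M)"
    unfolding set_lebesgue_integral_def by (intro Bochner_Integration.integral_cong) (auto simp: indicator_def)
  also have "\<dots> = measure M (A \<inter> C)"
    using A \<open>C \<in> sets M\<close> by (simp add: Int_absorb2 sets.sets_into_space Int_assoc)
  finally show "(\<integral>\<omega>\<in>C. cond_prob_le M d P i Q u \<omega> \<partial>M) = measure M ({\<omega>\<in>space M. Q \<omega> \<le> u} \<inter> C)"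
    unfolding A_def .
qed

lemma measure_Int_le_by_cond_prob_le:
  assumes "\<And>j. j \<in> {1..d} \<Longrightarrow> P j \<in> borel_measurable M"
    and "Q \<in> borel_measurable M" "Q' \<in> borel_measurable M" "C \<in> sets (sigma_Pminus M d P i)"
    and "AE \<omega> in M. cond_prob_le M d P i Q u \<omega> \<le> K * cond_prob_le M d P i Q' v \<omega>"
  shows "measure M ({\<omega>\<in>space M. Q \<omega> \<le> u} \<inter> C) \<le> K * measure M ({\<omega>\<in>space M. Q' \<omega> \<le> v} \<inter> C)"
proof -
  have "C \<in> sets M"
    using assms(4) subalgebra_sigma_Pminus[where d=d and P=P and i=i, OF assms(1)]
    by (auto simp: subalgebra_def)
  have "set_integrable M C f" if "integrable M f" for f :: "'a \<Rightarrow> real"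
    unfolding set_integrable_def using integrable_mult_indicator[OF \<open>C \<in> sets M\<close> that] by simp
  then have "(\<integral>\<omega>\<in>C. cond_prob_le M d P i Q u \<omega> \<partial>M) \<le> (\<integral>\<omega>\<in>C. K * cond_prob_le M d P i Q' v \<omega> \<partial>M)"
    using assms(5) integrable_cond_prob_le[OF assms(1,2)] integrable_cond_prob_le[OF assms(1,3)]
    by (intro set_integral_mono_AE) auto
  then show ?thesis
    using set_integral_cond_prob_le[OF assms(1,2,4)] set_integral_cond_prob_le[OF assms(1,3,4)] by simp
qed

end

section \<open>The FDR bound\<close>

definition fdr_summand ::
    "'a measure \<Rightarrow> nat \<Rightarrow> (nat \<Rightarrow> real) \<Rightarrow> (nat \<Rightarrow> 'a \<Rightarrow> real) \<Rightarrow> nat \<Rightarrow> ('a \<Rightarrow> real) \<Rightarrow> real"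
  where "fdr_summand M d alpha P i Q = (\<Sum>k\<in>{1..d}.
    measure M ({\<omega>\<in>space M. Q \<omega> \<le> alpha k}
      \<inter> {\<omega>\<in>space M. stepup_R_minus d alpha i (Pminus d P i \<omega>) = k}) / real k)"

lemma sum_diff_le_telescope:
  fixes x y :: "nat \<Rightarrow> real"
  assumes "\<And>k. 1 \<le> k \<Longrightarrow> k < n \<Longrightarrow> x (Suc k) \<le> y k" "1 \<le> n"
  shows "(\<Sum>k\<in>{1..n}. x k - y k) \<le> x 1 - y n"
  using assms
proof (induction n)
  case (Suc n)
  show ?case
  proof (cases "n = 0")
    case False
    then have "(\<Sum>k\<in>{1..n}. x k - y k) \<le> x 1 - y n" "x (Suc n) \<le> y n" using Suc by auto
    moreover have "(\<Sum>k\<in>{1..Suc n}. x k - y k) = (\<Sum>k\<in>{1..n}. x k - y k) + (x (Suc n) - y (Suc n))"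
      by (rule sum.cl_ivl_Suc[THEN trans]) simp
    ultimately show ?thesis by linarith
  qed simp
qed simp

context prob_space
begin

lemma FDR_eq_sum_fdr_summand:
  assumes "mono alpha" "I0 \<subseteq> {1..d}" "\<And>j. j \<in> {1..d} \<Longrightarrow> P j \<in> borel_measurable M"
  shows "FDR M d alpha P I0 = (\<Sum>i\<in>I0. fdr_summand M d alpha P i (P i))"
proof -
  define E where "E i k = {\<omega>\<in>space M. P i \<omega> \<le> alpha k}
      \<inter> {\<omega>\<in>space M. stepup_R_minus d alpha i (Pminus d P i \<omega>) = k}" for i k
  have E_sets: "E i k \<in> sets M" if "i \<in> I0" for i k
  proof -
    have [measurable]: "P i \<in> borel_measurable M" using that assms(2,3) by blast
    have [measurable]: "(\<lambda>\<omega>. stepup_R_minus d alpha i (Pminus d P i \<omega>)) \<in> measurable M (count_space UNIV)"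
      using assms(3) by (intro measurable_stepup_R_minus) auto
    show ?thesis unfolding E_def by measurable
  qed
  have "FDR M d alpha P I0 = (\<integral>\<omega>. (\<Sum>i\<in>I0. \<Sum>k\<in>{1..d}. indicator (E i k) \<omega> / real k) \<partial>M)"
    unfolding FDR_def false_discovery_proportion_eq[OF assms(1,2)]
    by (intro Bochner_Integration.integral_cong refl sum.cong) (auto simp: E_def indicator_def)
  also have "\<dots> = (\<Sum>i\<in>I0. \<Sum>k\<in>{1..d}. measure M (E i k) / real k)"
    using E_sets by (simp add: emeasure_eq_measure Bochner_Integration.integral_sum
        Bochner_Integration.integrable_sum)
  finally show ?thesis unfolding fdr_summand_def E_def .
qed

lemma PLTDN_b_on_stepup_R_minus_ge:
  fixes alpha :: "nat \<Rightarrow> real" and m :: nat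
  assumes "\<And>j. j \<in> {1..d} \<Longrightarrow> P j \<in> borel_measurable M" "Q \<in> borel_measurable M"
    and "PLTDN_b M d P i Q c" "0 < u" "u \<le> v" "v < c"
  defines "E \<equiv> {\<omega>\<in>space M. m \<le> stepup_R_minus d alpha i (Pminus d P i \<omega>)}"
  shows "measure M ({\<omega>\<in>space M. Q \<omega> \<le> v} \<inter> E) / v \<le> measure M ({\<omega>\<in>space M. Q \<omega> \<le> u} \<inter> E) / u"
proof -
  have [measurable]: "(\<lambda>\<omega>. stepup_R_minus d alpha i (Pminus d P i \<omega>)) \<in> measurable M (count_space UNIV)"
    using assms(1) by (intro measurable_stepup_R_minus) auto
  have "E \<in> sets M" unfolding E_def by measurable
  have "{\<omega>\<in>space M. Q \<omega> \<le> v} \<in> sets M" using assms(2) by measurable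
  show ?thesis
  proof (cases "measure M E = 0")
    case True
    then have "measure M ({\<omega>\<in>space M. Q \<omega> \<le> v} \<inter> E) = 0"
      using finite_measure_mono[OF _ \<open>E \<in> sets M\<close>, of "{\<omega>\<in>space M. Q \<omega> \<le> v} \<inter> E"]
        measure_nonneg[of M "{\<omega>\<in>space M. Q \<omega> \<le> v} \<inter> E"] by simp
    then show ?thesis using assms(4) by simp
  next
    case False
    then have pos: "0 < measure M E" using measure_nonneg[of M E] by linarith
    \<comment> \<open>\<open>E\<close> is a sublevel set of \<open>-R\<^sub>-\<^sub>i\<close>, a coordinatewise nondecreasing function of \<open>P\<^sub>-\<^sub>i\<close>.\<close>
    let ?g = "\<lambda>z. - real (stepup_R_minus d alpha i z)"
    have "coord_mono d i ?g"
      unfolding coord_mono_def using stepup_R_minus_antimono by (auto simp del: of_nat_le_iff)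
    moreover have level_set: "{\<omega>\<in>space M. ?g (Pminus d P i \<omega>) \<le> - real m} = E"
      unfolding E_def by auto
    moreover have level_set_Int: "{\<omega>\<in>space M. Q \<omega> \<le> w \<and> ?g (Pminus d P i \<omega>) \<le> - real m}
        = {\<omega>\<in>space M. Q \<omega> \<le> w} \<inter> E" for w
      unfolding E_def by auto
    ultimately have "measure M ({\<omega>\<in>space M. Q \<omega> \<le> v} \<inter> E) / measure M E / v
        \<le> measure M ({\<omega>\<in>space M. Q \<omega> \<le> u} \<inter> E) / measure M E / u"
      using assms(3)[unfolded PLTDN_b_def, rule_format, of ?g "- real m" u v,
          unfolded level_set level_set_Int] pos \<open>E \<in> sets M\<close> assms(4-6)
      by blast
    then have "measure M ({\<omega>\<in>space M. Q \<omega> \<le> v} \<inter> E) / v / measure M E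
        \<le> measure M ({\<omega>\<in>space M. Q \<omega> \<le> u} \<inter> E) / u / measure M E"
      by (simp only: divide_divide_eq_left mult.commute)
    then show ?thesis using pos by (simp add: divide_le_cancel del: divide_divide_eq_left)
  qed
qed

context
  fixes d :: nat and P :: "nat \<Rightarrow> 'a \<Rightarrow> real" and a c :: real
  assumes P_meas: "\<And>j. j \<in> {1..d} \<Longrightarrow> P j \<in> borel_measurable M"
    and a_pos: "0 < a" and alpha_d_less: "real d * a < c"
begin

lemma alpha_less:
  assumes "k \<le> d"
  shows "real k * a < c"
proof -
  have "real k * a \<le> real d * a" using assms a_pos by (intro mult_right_mono) auto
  then show ?thesis using alpha_d_less by linarith
qed

lemma fdr_summand_le_PLTDN_a:
  assumes i: "i \<in> {1..d}" and Q: "Q \<in> borel_measurable M" and "PLTDN_a M d P i Q c"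
  shows "fdr_summand M d (\<lambda>k. real k * a) P i Q \<le> measure M {\<omega>\<in>space M. Q \<omega> \<le> a}"
proof -
  define C where "C k = {\<omega>\<in>space M. stepup_R_minus d (\<lambda>k. real k * a) i (Pminus d P i \<omega>) = k}" for k
  define A where "A = {\<omega>\<in>space M. Q \<omega> \<le> a}"
  have [measurable]: "(\<lambda>\<omega>. stepup_R_minus d (\<lambda>k. real k * a) i (Pminus d P i \<omega>))
      \<in> measurable M (count_space UNIV)"
    using P_meas by (intro measurable_stepup_R_minus) auto
  have C_sets: "C k \<in> sets M" for k unfolding C_def by measurable
  have "measure M ({\<omega>\<in>space M. Q \<omega> \<le> real k * a} \<inter> C k) / real k \<le> measure M (A \<inter> C k)"
    if k: "k \<in> {1..d}" for k
  proof -
    have "AE \<omega> in M. cond_prob_le M d P i Q (real k * a) \<omega> / (real k * a)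
        \<le> cond_prob_le M d P i Q a \<omega> / a"
      using assms(3) a_pos alpha_less[of k] k unfolding PLTDN_a_def by auto
    then have "AE \<omega> in M. cond_prob_le M d P i Q (real k * a) \<omega> \<le> real k * cond_prob_le M d P i Q a \<omega>"
      by eventually_elim (use a_pos k in \<open>auto simp: field_simps\<close>)
    moreover have "C k \<in> sets (sigma_Pminus M d P i)"
      unfolding C_def by (rule stepup_R_minus_eq_in_sigma_Pminus)
    ultimately have "measure M ({\<omega>\<in>space M. Q \<omega> \<le> real k * a} \<inter> C k) \<le> real k * measure M (A \<inter> C k)"
      unfolding A_def by (intro measure_Int_le_by_cond_prob_le[OF P_meas Q Q])
    then show ?thesis using k by (simp add: divide_le_eq mult.commute)
  qed
  then have "fdr_summand M d (\<lambda>k. real k * a) P i Q \<le> (\<Sum>k\<in>{1..d}. measure M (A \<inter> C k))"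
    unfolding fdr_summand_def C_def by (intro sum_mono)
  also have "\<dots> = measure M (\<Union>k\<in>{1..d}. A \<inter> C k)"
    using Q C_sets
    by (intro finite_measure_finite_Union[symmetric]) (auto simp: A_def disjoint_family_on_def C_def)
  also have "\<dots> \<le> measure M A"
    using Q by (intro finite_measure_mono) (auto simp: A_def)
  finally show ?thesis unfolding A_def .
qed

lemma fdr_summand_le_PLTDN_b:
  assumes i: "i \<in> {1..d}" and Q: "Q \<in> borel_measurable M" and "PLTDN_b M d P i Q c"
  shows "fdr_summand M d (\<lambda>k. real k * a) P i Q \<le> measure M {\<omega>\<in>space M. Q \<omega> \<le> a}"
proof -
  define R where "R \<omega> = stepup_R_minus d (\<lambda>k. real k * a) i (Pminus d P i \<omega>)" for \<omega>
  define A where "A k = {\<omega>\<in>space M. Q \<omega> \<le> real k * a}" for k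
  define E where "E k = {\<omega>\<in>space M. k \<le> R \<omega>}" for k
  define x where "x k = measure M (A k \<inter> E k) / real k" for k
  define y where "y k = measure M (A k \<inter> E (Suc k)) / real k" for k
  have [measurable]: "R \<in> measurable M (count_space UNIV)"
    unfolding R_def using P_meas by (intro measurable_stepup_R_minus) auto
  have A_sets: "A k \<in> sets M" and E_sets: "E k \<in> sets M" for k
    unfolding A_def E_def using Q by measurable
  have "x (Suc k) \<le> y k" if k: "1 \<le> k" "k < d" for k
  proof -
    have "measure M (A (Suc k) \<inter> E (Suc k)) / (real (Suc k) * a)
        \<le> measure M (A k \<inter> E (Suc k)) / (real k * a)"
      unfolding A_def E_def R_def
      using k a_pos alpha_less[of "Suc k"]
      by (intro PLTDN_b_on_stepup_R_minus_ge[OF P_meas Q assms(3)]) auto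
    then have "x (Suc k) / a \<le> y k / a"
      unfolding x_def y_def by (simp add: field_simps)
    then show ?thesis using a_pos by (simp add: divide_le_cancel)
  qed
  then have "(\<Sum>k\<in>{1..d}. x k - y k) \<le> x 1 - y d"
    using i by (intro sum_diff_le_telescope) auto
  moreover have "fdr_summand M d (\<lambda>k. real k * a) P i Q = (\<Sum>k\<in>{1..d}. x k - y k)"
  proof -
    have "A k \<inter> {\<omega>\<in>space M. R \<omega> = k} = (A k \<inter> E k) - (A k \<inter> E (Suc k))" for k
      unfolding A_def E_def by auto
    moreover have "measure M ((A k \<inter> E k) - (A k \<inter> E (Suc k)))
        = measure M (A k \<inter> E k) - measure M (A k \<inter> E (Suc k))" for k
      using A_sets E_sets by (intro finite_measure_Diff) (auto simp: E_def)
    ultimately show ?thesis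
      unfolding fdr_summand_def x_def y_def R_def[symmetric] A_def[symmetric]
      by (simp add: diff_divide_distrib)
  qed
  moreover have "y d \<ge> 0" "x 1 \<le> measure M (A 1)"
    unfolding x_def y_def using finite_measure_mono[OF _ A_sets] by auto
  ultimately show ?thesis unfolding A_def by simp
qed

lemma fdr_summand_le_PLTDN:
  assumes "i \<in> {1..d}" "Q \<in> borel_measurable M" "PLTDN M d P i Q c"
  shows "fdr_summand M d (\<lambda>k. real k * a) P i Q \<le> measure M {\<omega>\<in>space M. Q \<omega> \<le> a}"
  using assms fdr_summand_le_PLTDN_a fdr_summand_le_PLTDN_b unfolding PLTDN_def by blast

lemma fdr_summand_mono:
  assumes "Q \<in> borel_measurable M" "i \<in> {1..d}"
    and "\<And>u. 0 < u \<Longrightarrow> u < c \<Longrightarrow>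
      AE \<omega> in M. cond_prob_le M d P i (P i) u \<omega> \<le> cond_prob_le M d P i Q u \<omega>"
  shows "fdr_summand M d (\<lambda>k. real k * a) P i (P i) \<le> fdr_summand M d (\<lambda>k. real k * a) P i Q"
proof -
  define C where "C k = {\<omega>\<in>space M. stepup_R_minus d (\<lambda>k. real k * a) i (Pminus d P i \<omega>) = k}" for k
  have "measure M ({\<omega>\<in>space M. P i \<omega> \<le> real k * a} \<inter> C k)
      \<le> 1 * measure M ({\<omega>\<in>space M. Q \<omega> \<le> real k * a} \<inter> C k)" if "k \<in> {1..d}" for k
  proof -
    have "AE \<omega> in M. cond_prob_le M d P i (P i) (real k * a) \<omega>
        \<le> 1 * cond_prob_le M d P i Q (real k * a) \<omega>"
      using assms(3) a_pos alpha_less[of k] that by simp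
    moreover have "C k \<in> sets (sigma_Pminus M d P i)"
      unfolding C_def by (rule stepup_R_minus_eq_in_sigma_Pminus)
    ultimately show ?thesis
      by (intro measure_Int_le_by_cond_prob_le[OF P_meas P_meas[OF assms(2)] assms(1)])
  qed
  then show ?thesis
    unfolding fdr_summand_def C_def[symmetric] by (intro sum_mono divide_right_mono) auto
qed

lemma fdr_summand_le_PLTDN_stoch_smaller:
  assumes "Q \<in> borel_measurable M" "i \<in> {1..d}"
    and "\<And>u. 0 < u \<Longrightarrow> u < c \<Longrightarrow>
      AE \<omega> in M. cond_prob_le M d P i (P i) u \<omega> \<le> cond_prob_le M d P i Q u \<omega>"
    and "PLTDN M d P i Q c"
  shows "fdr_summand M d (\<lambda>k. real k * a) P i (P i) \<le> measure M {\<omega>\<in>space M. Q \<omega> \<le> a}"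
  using fdr_summand_mono[OF assms(1-3)] fdr_summand_le_PLTDN[OF assms(2,1,4)] by linarith

end

end

theorem theorem1:
  fixes M :: "'a measure" and d :: nat and P Phat :: "nat \<Rightarrow> 'a \<Rightarrow> real"
    and I0 S :: "nat set" and alpha_t c :: real
  assumes "prob_space M"
    and "d \<ge> 1"
    and "\<And>i. i \<in> {1..d} \<Longrightarrow> P i \<in> borel_measurable M"
    and "I0 \<subseteq> {1..d}"
    and "0 < alpha_t" and "alpha_t < 1"
    and "alpha_t < c" and "c \<le> 1"
    and "S \<subseteq> I0"
    and "\<And>i. i \<in> I0 - S \<Longrightarrow> PLTDN M d P i (P i) c"
    and "\<And>i. i \<in> S \<Longrightarrow> Phat i \<in> borel_measurable M"
    and "\<And>i. i \<in> S \<Longrightarrow> \<exists>h :: (nat \<Rightarrow> real) \<Rightarrow> real \<Rightarrow> real. (\<forall>x. mono (h x)) \<and>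
            (AE \<omega> in M. Phat i \<omega> = h (Pminus d P i \<omega>) (P i \<omega>))"
    and "\<And>i u. i \<in> S \<Longrightarrow> 0 < u \<Longrightarrow> u < c \<Longrightarrow>
            AE \<omega> in M. cond_prob_le M d P i (P i) u \<omega> \<le> cond_prob_le M d P i (Phat i) u \<omega>"
    and "\<And>i. i \<in> S \<Longrightarrow> PLTDN M d P i (Phat i) c"
  shows "FDR M d (\<lambda>k. real k * alpha_t / real d) P I0
           \<le> (\<Sum>i\<in>I0 - S. measure M {\<omega> \<in> space M. P i \<omega> \<le> alpha_t / real d})
             + (\<Sum>i\<in>S. measure M {\<omega> \<in> space M. Phat i \<omega> \<le> alpha_t / real d})"
proof -
  interpret prob_space M by fact
  define a where "a = alpha_t / real d"
  have alpha_eq: "(\<lambda>k. real k * alpha_t / real d) = (\<lambda>k. real k * a)" by (simp add: a_def)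
  have a_pos: "0 < a" and alpha_d_less: "real d * a < c" using assms(2,5,7) by (simp_all add: a_def)
  have "mono (\<lambda>k. real k * a)" using a_pos by (auto intro!: monoI mult_right_mono)
  have "finite I0" using assms(4) finite_subset by blast
  have "FDR M d (\<lambda>k. real k * a) P I0 = (\<Sum>i\<in>I0 - S. fdr_summand M d (\<lambda>k. real k * a) P i (P i))
      + (\<Sum>i\<in>S. fdr_summand M d (\<lambda>k. real k * a) P i (P i))"
    using FDR_eq_sum_fdr_summand[OF \<open>mono _\<close> assms(4,3)] sum.subset_diff[OF assms(9) \<open>finite I0\<close>]
    by simp
  also have "\<dots> \<le> (\<Sum>i\<in>I0 - S. measure M {\<omega>\<in>space M. P i \<omega> \<le> a})
      + (\<Sum>i\<in>S. measure M {\<omega>\<in>space M. Phat i \<omega> \<le> a})"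
    using assms(3,4,9,10,11,13,14)
    by (intro add_mono sum_mono
        fdr_summand_le_PLTDN[where d=d and P=P, OF assms(3) a_pos alpha_d_less]
        fdr_summand_le_PLTDN_stoch_smaller[where d=d and P=P, OF assms(3) a_pos alpha_d_less])
      auto
  finally show ?thesis unfolding alpha_eq a_def .
qed

end
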